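(* Let $\lambda$ be a Salem number and $n$ a positive integer. Then the positive real number $\sqrt[n]{\lambda}$ has an algebraic conjugate (over $\mathbb{Q}$) of modulus $1$.
   Context: A Salem number is a real algebraic integer $\lambda>1$ all of whose other conjugates over $\mathbb{Q}$ have modulus at most $1$, with at least one conjugate of modulus exactly $1$. *)

theory Defs
  imports "HOL-Computational_Algebra.Computational_Algebra"
begin

definition rat_min_poly :: "rat poly \<Rightarrow> complex \<Rightarrow> bool" where
  "rat_min_poly p x \<longleftrightarrow> lead_coeff p = 1 \<and> irreducible p \<and> poly (map_poly of_rat p) x = 0"

definition rat_conjugate :: "complex \<Rightarrow> complex \<Rightarrow> bool" where
  "rat_conjugate x z \<longleftrightarrow> (\<exists>p. rat_min_poly p x \<and> poly (map_poly of_rat p) z = 0)"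

definition salem_number :: "real \<Rightarrow> bool" where
  "salem_number l \<longleftrightarrow> algebraic_int l \<and> l > 1 \<and>
     (\<forall>z. rat_conjugate (complex_of_real l) z \<and> z \<noteq> complex_of_real l \<longrightarrow> cmod z \<le> 1) \<and>
     (\<exists>z. rat_conjugate (complex_of_real l) z \<and> cmod z = 1)"

end

(*
  The minimal polynomial p of a Salem number lambda has a root z0 on the unit circle. As
  1/z0 = cnj z0 is then a root too, p divides its reciprocal polynomial, so its roots are
  lambda, 1/lambda and numbers of modulus 1.

  Let q be the minimal polynomial of mu = lambda^(1/n); the n-th power of every root of q is a
  root of p. If no root of q had modulus 1, every root w of q would satisfy w^n = lambda or
  w^n = 1/lambda, i.e. w^(2n) + 1 = t w^n with t = lambda + 1/lambda. Reducing X^(2n) + 1 and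
  X^n modulo q gives polynomials of degree below deg q satisfying this relation at the deg q
  distinct roots of q, hence coefficientwise, so t is rational. Then p divides X^2 - t X + 1,
  and z0 would be lambda or 1/lambda.
*)

theory Submission
  imports Defs "HOL-Computational_Algebra.Field_as_Ring"
begin

lemma degree_map_poly_of_rat [simp]:
  "degree (map_poly (of_rat :: rat \<Rightarrow> 'a::field_char_0) p) = degree p"
  by (rule degree_map_poly) simp

lemma map_poly_of_rat_add:
  "map_poly (of_rat :: rat \<Rightarrow> 'a::field_char_0) (p + q) = map_poly of_rat p + map_poly of_rat q"
  by (rule poly_eqI) (simp add: coeff_map_poly of_rat_add)

lemma map_poly_of_rat_smult:
  "map_poly (of_rat :: rat \<Rightarrow> 'a::field_char_0) (smult c p) = smult (of_rat c) (map_poly of_rat p)"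
  by (rule map_poly_smult) (simp_all add: of_rat_mult)

lemma map_poly_of_rat_pCons:
  "map_poly (of_rat :: rat \<Rightarrow> 'a::field_char_0) (pCons c p) = pCons (of_rat c) (map_poly of_rat p)"
  by (rule map_poly_pCons) simp

lemma map_poly_of_rat_mult:
  "map_poly (of_rat :: rat \<Rightarrow> 'a::field_char_0) (p * q) = map_poly of_rat p * map_poly of_rat q"
  by (induction p) (simp_all add: map_poly_of_rat_add map_poly_of_rat_smult map_poly_of_rat_pCons)

lemma map_poly_of_rat_pcompose:
  "map_poly (of_rat :: rat \<Rightarrow> 'a::field_char_0) (pcompose p q) = pcompose (map_poly of_rat p) (map_poly of_rat q)"
  by (induction p) (simp_all add: map_poly_of_rat_add map_poly_of_rat_mult map_poly_of_rat_pCons pcompose_pCons)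

lemma map_poly_of_rat_pderiv:
  "map_poly (of_rat :: rat \<Rightarrow> 'a::field_char_0) (pderiv p) = pderiv (map_poly of_rat p)"
  by (rule poly_eqI) (simp add: coeff_map_poly coeff_pderiv of_rat_mult of_rat_add)

lemma map_poly_of_rat_reflect_poly:
  "map_poly (of_rat :: rat \<Rightarrow> 'a::field_char_0) (reflect_poly p) = reflect_poly (map_poly of_rat p)"
  by (rule poly_eqI) (simp add: coeff_map_poly coeff_reflect_poly)

lemma map_poly_of_rat_root_if_dvd:
  fixes z :: "'a::field_char_0"
  assumes "q dvd r" "poly (map_poly of_rat q) z = 0"
  shows "poly (map_poly of_rat r) z = 0"
  using assms by (auto simp: map_poly_of_rat_mult)

lemma irreducible_dvd_if_common_root:
  fixes q r :: "rat poly" and z :: "'a::field_char_0"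
  assumes "irreducible q" "poly (map_poly of_rat q) z = 0" "poly (map_poly of_rat r) z = 0"
  shows "q dvd r"
proof (rule ccontr)
  assume "\<not> q dvd r"
  then have "coprime q r"
    by (rule prime_elem_imp_coprime[OF field_poly_irreducible_imp_prime[OF assms(1)]])
  then obtain u v where "u * q + v * r = 1"
    by (metis bezout_coefficients_fst_snd coprime_imp_gcd_eq_1)
  then have "poly (map_poly of_rat (u * q + v * r)) z = (1 :: 'a)"
    by simp
  with assms(2,3) show False
    by (simp add: map_poly_of_rat_add map_poly_of_rat_mult)
qed

lemma irreducible_field_poly_degree_pos:
  fixes p :: "'a::field poly"
  assumes "irreducible p"
  shows "degree p > 0"
  using assms by (auto simp: irreducible_def is_unit_iff_degree)

lemma rsquarefree_map_poly_of_rat: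
  fixes q :: "rat poly"
  assumes "irreducible q"
  shows "rsquarefree (map_poly (of_rat :: rat \<Rightarrow> 'a::field_char_0) q)"
  unfolding rsquarefree_roots
proof (intro allI notI)
  fix a :: 'a
  assume "poly (map_poly of_rat q) a = 0 \<and> poly (pderiv (map_poly of_rat q)) a = 0"
  then have "q dvd pderiv q"
    by (intro irreducible_dvd_if_common_root[OF assms]) (auto simp: map_poly_of_rat_pderiv)
  moreover have "degree q > 0"
    using irreducible_field_poly_degree_pos[OF assms] .
  then have "pderiv q \<noteq> 0"
    by (simp add: pderiv_eq_0_iff)
  ultimately have "degree q \<le> degree (pderiv q)"
    by (rule dvd_imp_degree_le)
  with \<open>degree q > 0\<close> show False
    by (simp add: degree_pderiv)
qed

lemma card_roots_map_poly_of_rat: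
  fixes q :: "rat poly"
  assumes "irreducible q"
  shows "card {z :: complex. poly (map_poly of_rat q) z = 0} = degree q"
proof -
  let ?Q = "map_poly (of_rat :: rat \<Rightarrow> complex) q"
  have "q \<noteq> 0"
    using assms by auto
  have "degree q = degree (smult (lead_coeff ?Q) (\<Prod>z | poly ?Q z = 0. [:-z, 1:]))"
    using complex_poly_decompose_rsquarefree[OF rsquarefree_map_poly_of_rat[OF assms]] by simp
  also have "\<dots> = card {z. poly ?Q z = 0}"
    using \<open>q \<noteq> 0\<close> by (simp add: degree_prod_sum_eq coeff_map_poly)
  finally show ?thesis ..
qed

lemma irreducible_factor_with_root:
  fixes r :: "rat poly" and x :: "'a::field_char_0"
  assumes "r \<noteq> 0" "poly (map_poly of_rat r) x = 0"
  shows "\<exists>q. irreducible q \<and> poly (map_poly of_rat q) x = 0"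
  using assms
proof (induction "degree r" arbitrary: r rule: less_induct)
  case less
  show ?case
  proof (cases "irreducible r")
    case True
    with less.prems show ?thesis by blast
  next
    case False
    have "\<not> r dvd 1"
      using less.prems by (auto simp: is_unit_poly_iff map_poly_of_rat_pCons)
    with False less.prems(1) obtain a b where r: "r = a * b" "\<not> a dvd 1" "\<not> b dvd 1"
      by (auto simp: irreducible_def)
    with less.prems(1) have "a \<noteq> 0" "b \<noteq> 0"
      by auto
    with r have "degree a < degree r" "degree b < degree r"
      by (auto simp: degree_mult_eq is_unit_iff_degree)
    moreover have "poly (map_poly of_rat a) x = 0 \<or> poly (map_poly of_rat b) x = 0"
      using less.prems(2) r(1) by (simp add: map_poly_of_rat_mult)
    ultimately show ?thesis
      using less.hyps \<open>a \<noteq> 0\<close> \<open>b \<noteq> 0\<close> by blast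
  qed
qed

lemma rat_min_poly_exists:
  assumes "r \<noteq> 0" "poly (map_poly of_rat r) x = 0"
  shows "\<exists>q. rat_min_poly q x"
proof -
  obtain q where q: "irreducible q" "poly (map_poly of_rat q) x = 0"
    using irreducible_factor_with_root[OF assms] by blast
  then have "q \<noteq> 0"
    by auto
  have normalize_q: "normalize q = smult (inverse (lead_coeff q)) q"
    by (rule poly_eqI) (simp add: coeff_normalize field_simps)
  have "lead_coeff (normalize q) = 1" "poly (map_poly of_rat (normalize q)) x = 0"
    unfolding normalize_q using q(2) \<open>q \<noteq> 0\<close> by (simp_all add: map_poly_of_rat_smult)
  moreover have "irreducible (normalize q)"
    using q(1) by simp
  ultimately have "rat_min_poly (normalize q) x"
    unfolding rat_min_poly_def by blast
  then show ?thesis ..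
qed

lemma rat_conjugate_iff_root:
  assumes "rat_min_poly p x"
  shows "rat_conjugate x z \<longleftrightarrow> poly (map_poly of_rat p) z = 0"
proof
  assume "rat_conjugate x z"
  then obtain q where q: "rat_min_poly q x" "poly (map_poly of_rat q) z = 0"
    unfolding rat_conjugate_def by blast
  have "q dvd p"
    using q(1) assms by (intro irreducible_dvd_if_common_root[of q x]) (auto simp: rat_min_poly_def)
  then show "poly (map_poly of_rat p) z = 0"
    using q(2) by (rule map_poly_of_rat_root_if_dvd)
next
  assume "poly (map_poly of_rat p) z = 0"
  with assms show "rat_conjugate x z"
    unfolding rat_conjugate_def by blast
qed

lemma complex_of_rat_in_Reals: "complex_of_rat r \<in> \<real>"
  by (cases r) (simp add: of_rat_rat)

lemma inverse_root_if_unimodular_root: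
  fixes p :: "rat poly" and z0 a :: complex
  assumes irr: "irreducible p" and z0: "poly (map_poly of_rat p) z0 = 0" "cmod z0 = 1"
    and a: "poly (map_poly of_rat p) a = 0"
  shows "a \<noteq> 0" and "poly (map_poly of_rat p) (inverse a) = 0"
proof -
  have "poly (map_poly of_rat p) 0 \<noteq> (0 :: complex)"
  proof
    assume "poly (map_poly of_rat p) 0 = (0 :: complex)"
    then have "p dvd [:0, 1:]"
      by (rule irreducible_dvd_if_common_root[OF irr]) (simp add: map_poly_of_rat_pCons)
    from map_poly_of_rat_root_if_dvd[OF this z0(1)] have "z0 = 0"
      by (simp add: map_poly_of_rat_pCons)
    with z0(2) show False
      by simp
  qed
  with a show "a \<noteq> 0"
    by auto
  have "inverse z0 = cnj z0"
    using complex_div_cnj[of 1 z0] z0(2) by (simp add: divide_inverse)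
  moreover have "poly (map_poly of_rat p) (cnj z0) = 0"
    using z0(1) by (subst real_poly_cnj_root_iff) (simp_all add: coeff_map_poly complex_of_rat_in_Reals)
  moreover have "z0 \<noteq> 0"
    using z0(2) by auto
  ultimately have "poly (map_poly of_rat (reflect_poly p)) z0 = 0"
    by (simp add: map_poly_of_rat_reflect_poly poly_reflect_poly_nz)
  then have "p dvd reflect_poly p"
    by (rule irreducible_dvd_if_common_root[OF irr z0(1)])
  from map_poly_of_rat_root_if_dvd[OF this a] \<open>a \<noteq> 0\<close>
  show "poly (map_poly of_rat p) (inverse a) = 0"
    by (simp add: map_poly_of_rat_reflect_poly poly_reflect_poly_nz)
qed

lemma salem_number_min_poly:
  assumes "salem_number l"
  obtains p z0 where "rat_min_poly p (of_real l)" "poly (map_poly of_rat p) z0 = 0" "cmod z0 = 1"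
    and "\<And>z. poly (map_poly of_rat p) z = 0 \<Longrightarrow>
           z = of_real l \<or> z = inverse (of_real l) \<or> cmod z = 1"
proof -
  let ?L = "complex_of_real l"
  from assms have small: "\<And>z. rat_conjugate ?L z \<Longrightarrow> z \<noteq> ?L \<Longrightarrow> cmod z \<le> 1"
    and "\<exists>z. rat_conjugate ?L z \<and> cmod z = 1"
    unfolding salem_number_def by auto
  then obtain p z0 where p: "rat_min_poly p ?L"
    and z0: "poly (map_poly of_rat p) z0 = 0" "cmod z0 = 1"
    unfolding rat_conjugate_def by blast
  have irr: "irreducible p"
    using p by (simp add: rat_min_poly_def)
  have "z = ?L \<or> z = inverse ?L \<or> cmod z = 1" if z: "poly (map_poly of_rat p) z = 0" for z
  proof (rule ccontr)
    assume not_salem: "\<not> ?thesis"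
    then have "cmod z < 1"
      using small[of z] z by (force simp: rat_conjugate_iff_root[OF p])
    moreover have "z \<noteq> 0"
      by (rule inverse_root_if_unimodular_root(1)[OF irr z0 z])
    ultimately have "cmod (inverse z) > 1"
      by (simp add: norm_inverse one_less_inverse)
    moreover have "poly (map_poly of_rat p) (inverse z) = 0"
      by (rule inverse_root_if_unimodular_root(2)[OF irr z0 z])
    ultimately have "inverse z = ?L"
      using small[of "inverse z"] by (force simp: rat_conjugate_iff_root[OF p])
    with not_salem show False
      by (metis inverse_inverse_eq)
  qed
  with p z0 show ?thesis
    using that by blast
qed

lemma rational_if_ratio_on_roots:
  fixes q A B :: "rat poly" and t :: complex
  assumes q: "irreducible q" and "\<not> q dvd B"
    and ratio: "\<And>w. poly (map_poly of_rat q) w = 0 \<Longrightarrow>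
                  poly (map_poly of_rat A) w = t * poly (map_poly of_rat B) w"
  shows "t \<in> \<rat>"
proof -
  define a b where "a = A mod q" and "b = B mod q"
  have "b \<noteq> 0"
    using assms(2) by (simp add: b_def mod_eq_0_iff_dvd)
  have poly_mod: "poly (map_poly of_rat (R mod q)) w = poly (map_poly of_rat R) w"
    if "poly (map_poly of_rat q) w = (0 :: complex)" for R w
  proof -
    have "map_poly of_rat R =
          map_poly of_rat (R div q) * map_poly of_rat q + map_poly (of_rat :: rat \<Rightarrow> complex) (R mod q)"
      by (metis div_mult_mod_eq map_poly_of_rat_add map_poly_of_rat_mult)
    with that show ?thesis
      by simp
  qed
  define c where "c = map_poly of_rat a - smult t (map_poly of_rat b)"
  have "q \<noteq> 0" "degree q > 0"
    using q irreducible_field_poly_degree_pos by auto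
  then have "degree (R mod q) < degree q" for R
    using degree_mod_less[of q R] by (cases "R mod q = 0") auto
  then have "degree a < degree q" "degree b < degree q"
    by (simp_all add: a_def b_def)
  then have "degree c < degree q"
    unfolding c_def by (metis degree_diff_less degree_map_poly_of_rat degree_smult_le le_less_trans)
  have "c = 0"
  proof (rule ccontr)
    assume "c \<noteq> 0"
    have "{w. poly (map_poly of_rat q) w = 0} \<subseteq> {w. poly c w = 0}"
      using ratio poly_mod by (auto simp: c_def a_def b_def)
    then have "degree q \<le> card {w. poly c w = 0}"
      using card_mono[OF poly_roots_finite[OF \<open>c \<noteq> 0\<close>]] card_roots_map_poly_of_rat[OF q] by metis
    also have "\<dots> \<le> degree c"
      by (rule card_poly_roots_bound[OF \<open>c \<noteq> 0\<close>])
    finally show False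
      using \<open>degree c < degree q\<close> by simp
  qed
  obtain i where "coeff b i \<noteq> 0"
    using \<open>b \<noteq> 0\<close> by (metis leading_coeff_0_iff)
  moreover have "of_rat (coeff a i) = t * of_rat (coeff b i)"
    using arg_cong[OF \<open>c = 0\<close>, of "\<lambda>p. coeff p i"] by (simp add: c_def coeff_map_poly)
  ultimately have "t = of_rat (coeff a i / coeff b i)"
    by (simp add: of_rat_divide field_simps)
  then show ?thesis
    by simp
qed

lemma reciprocal_pair_quadratic:
  fixes L x :: "'a::field"
  assumes "L \<noteq> 0"
  shows "x\<^sup>2 - (L + inverse L) * x + 1 = (x - L) * (x - inverse L)"
  using assms by (simp add: power2_eq_square algebra_simps)

lemma inverse_sum_rational_if_powers_of_roots:
  fixes L M :: complex
  assumes "rat_min_poly q M" "M \<noteq> 0" "L \<noteq> 0"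
    and pow: "\<And>w. poly (map_poly of_rat q) w = 0 \<Longrightarrow> w ^ n = L \<or> w ^ n = inverse L"
  shows "L + inverse L \<in> \<rat>"
proof -
  have q: "irreducible q" "poly (map_poly of_rat q) M = 0"
    using assms(1) by (simp_all add: rat_min_poly_def)
  have "\<not> q dvd monom 1 n"
  proof
    assume "q dvd monom 1 n"
    from map_poly_of_rat_root_if_dvd[OF this q(2)] \<open>M \<noteq> 0\<close> show False
      by (simp add: map_poly_monom poly_monom)
  qed
  moreover have "poly (map_poly of_rat (monom 1 n * monom 1 n + 1)) w =
                 (L + inverse L) * poly (map_poly of_rat (monom 1 n)) w"
    if "poly (map_poly of_rat q) w = 0" for w
  proof -
    have "(w ^ n)\<^sup>2 - (L + inverse L) * w ^ n + 1 = 0"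
      using pow[OF that] by (auto simp: reciprocal_pair_quadratic[OF \<open>L \<noteq> 0\<close>])
    then show ?thesis
      by (simp add: map_poly_of_rat_add map_poly_of_rat_mult map_poly_monom poly_monom
          power2_eq_square algebra_simps)
  qed
  ultimately show ?thesis
    by (rule rational_if_ratio_on_roots[OF q(1)])
qed

lemma roots_if_inverse_sum_rational:
  fixes L z :: complex
  assumes "rat_min_poly p L" "L \<noteq> 0" "L + inverse L \<in> \<rat>"
    and z: "poly (map_poly of_rat p) z = 0"
  shows "z = L \<or> z = inverse L"
proof -
  from assms(3) obtain s where s: "L + inverse L = of_rat s"
    by (auto elim: Rats_cases)
  define g :: "rat poly" where "g = [:1, -s, 1:]"
  have g: "poly (map_poly of_rat g) x = (x - L) * (x - inverse L)" for x
    using reciprocal_pair_quadratic[OF \<open>L \<noteq> 0\<close>, of x]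
    by (simp add: g_def s map_poly_of_rat_pCons of_rat_minus power2_eq_square algebra_simps)
  have "p dvd g"
    using assms(1) unfolding rat_min_poly_def
    by (intro irreducible_dvd_if_common_root[of p L]) (simp_all add: g)
  from map_poly_of_rat_root_if_dvd[OF this z] show ?thesis
    by (simp add: g)
qed

lemma rat_min_poly_nth_root:
  assumes p: "rat_min_poly p L" and "M ^ n = L" "n > 0"
  obtains q where "rat_min_poly q M"
    and "\<And>w :: complex.
           poly (map_poly of_rat q) w = 0 \<Longrightarrow> poly (map_poly of_rat p) (w ^ n) = 0"
proof -
  define P where "P = pcompose p (monom 1 n)"
  have poly_P: "poly (map_poly of_rat P) w = poly (map_poly of_rat p) (w ^ n)" for w :: complex
    by (simp add: P_def map_poly_of_rat_pcompose map_poly_monom poly_pcompose poly_monom)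
  have "p \<noteq> 0"
    using p by (simp add: rat_min_poly_def irreducible_def)
  with \<open>n > 0\<close> have "P \<noteq> 0"
    by (simp add: P_def pcompose_eq_0_iff degree_monom_eq)
  moreover have root_P: "poly (map_poly of_rat P) M = 0"
    using p \<open>M ^ n = L\<close> by (simp add: poly_P rat_min_poly_def)
  ultimately obtain q where q: "rat_min_poly q M"
    using rat_min_poly_exists by blast
  then have "q dvd P"
    using irreducible_dvd_if_common_root[of q M P] root_P by (simp add: rat_min_poly_def)
  show ?thesis
  proof (rule that[OF q])
    fix w :: complex
    assume "poly (map_poly of_rat q) w = 0"
    from map_poly_of_rat_root_if_dvd[OF \<open>q dvd P\<close> this]
    show "poly (map_poly of_rat p) (w ^ n) = 0"
      by (simp add: poly_P)
  qed
qed

theorem mainTheorem3: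
  fixes l :: real and n :: nat
  assumes "salem_number l" and "n > 0"
  shows "\<exists>z. rat_conjugate (complex_of_real (root n l)) z \<and> cmod z = 1"
proof (rule ccontr)
  assume no_unimodular: "\<not> ?thesis"
  let ?L = "complex_of_real l" and ?M = "complex_of_real (root n l)"
  obtain p z0 where p: "rat_min_poly p ?L"
    and z0: "poly (map_poly of_rat p) z0 = 0" "cmod z0 = 1"
    and roots_p: "\<And>z. poly (map_poly of_rat p) z = 0 \<Longrightarrow> z = ?L \<or> z = inverse ?L \<or> cmod z = 1"
    using salem_number_min_poly[OF assms(1)] by blast
  have "l > 1"
    using assms(1) by (simp add: salem_number_def)
  then have M: "?M ^ n = ?L" "?M \<noteq> 0" and L: "?L \<noteq> 0" "cmod ?L \<noteq> 1" "cmod (inverse ?L) \<noteq> 1"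
    using assms(2) by (auto simp flip: of_real_power simp: real_root_pow_pos norm_inverse)
  obtain q where q: "rat_min_poly q ?M"
    and roots_q: "\<And>w :: complex.
                    poly (map_poly of_rat q) w = 0 \<Longrightarrow> poly (map_poly of_rat p) (w ^ n) = 0"
    using rat_min_poly_nth_root[OF p M(1) assms(2)] by blast
  have powers: "w ^ n = ?L \<or> w ^ n = inverse ?L" if w: "poly (map_poly of_rat q) w = 0" for w
  proof -
    have "cmod w \<noteq> 1"
      using no_unimodular w q unfolding rat_conjugate_def by blast
    then have "cmod (w ^ n) \<noteq> 1"
      using power_eq_imp_eq_base[of "cmod w" n 1] assms(2) by (auto simp: norm_power)
    then show ?thesis
      using roots_p[OF roots_q[OF w]] by blast
  qed
  from inverse_sum_rational_if_powers_of_roots[OF q M(2) L(1) powers]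
  have "?L + inverse ?L \<in> \<rat>" .
  from roots_if_inverse_sum_rational[OF p L(1) this z0(1)]
  have "z0 = ?L \<or> z0 = inverse ?L" .
  with z0(2) L show False
    by auto
qed

end
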